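(* Let $A\subseteq\omega$ be a c.e. set which has a density and let $\epsilon$ be a positive real number. Then $A$ has a computable subset $B$ such that $D(A,B)<\epsilon$.
   Context: For $S\subseteq\omega$ and $n>0$, $\rho_n(S)=|S\cap[0,n)|/n$; the upper density is $\overline{\rho}(S)=\limsup_n\rho_n(S)$ and the density is $\rho(S)=\lim_n\rho_n(S)$ when the limit exists. For $A,B\subseteq\omega$, $D(A,B)=\overline{\rho}(A\triangle B)$, the upper density of the symmetric difference. *)

theory Defs
  imports "HOL-Analysis.Analysis"
begin

datatype recf =
    Zr
  | Sc
  | Id nat
  | Cn recf "recf list"
  | Pr recf recf
  | Mn recf

inductive eval :: "recf \<Rightarrow> nat list \<Rightarrow> nat \<Rightarrow> bool" where
  eval_Z: "eval Zr xs 0"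
| eval_S: "eval Sc (x # xs) (Suc x)"
| eval_Id: "i < length xs \<Longrightarrow> eval (Id i) xs (xs ! i)"
| eval_Cn: "length ys = length gs \<Longrightarrow> (\<forall>i<length gs. eval (gs ! i) xs (ys ! i))
             \<Longrightarrow> eval f ys y \<Longrightarrow> eval (Cn f gs) xs y"
| eval_Pr0: "eval f xs y \<Longrightarrow> eval (Pr f g) (0 # xs) y"
| eval_PrS: "eval (Pr f g) (n # xs) z \<Longrightarrow> eval g (z # n # xs) y
             \<Longrightarrow> eval (Pr f g) (Suc n # xs) y"
| eval_Mn: "eval f (n # xs) 0 \<Longrightarrow> (\<forall>m<n. \<exists>k. eval f (m # xs) (Suc k))
             \<Longrightarrow> eval (Mn f) xs n"

definition computable_set :: "nat set \<Rightarrow> bool" where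
  "computable_set B \<longleftrightarrow> (\<exists>f. \<forall>x. eval f [x] (if x \<in> B then 1 else 0))"

definition ce_set :: "nat set \<Rightarrow> bool" where
  "ce_set A \<longleftrightarrow> (\<exists>f. \<forall>x. x \<in> A \<longleftrightarrow> (\<exists>y. eval f [x] y))"

definition rho_n :: "nat set \<Rightarrow> nat \<Rightarrow> real" where
  "rho_n X n = real (card (X \<inter> {0..<n})) / real n"

definition upper_density :: "nat set \<Rightarrow> ereal" where
  "upper_density X = limsup (\<lambda>n. ereal (rho_n X (Suc n)))"

definition has_density :: "nat set \<Rightarrow> bool" where
  "has_density X \<longleftrightarrow> convergent (\<lambda>n. rho_n X (Suc n))"

definition D :: "nat set \<Rightarrow> nat set \<Rightarrow> ereal" where
  "D A B = upper_density ((A - B) \<union> (B - A))"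

end

theory Submission
  imports Defs
begin

text \<open>Let \<open>d\<close> be the density of \<open>A\<close>; if \<open>d < \<epsilon>\<close> the empty set will do. Otherwise fix a
  fraction \<open>p/q\<close> slightly below \<open>d\<close> and enumerate \<open>A\<close> by running its partial recursive
  function with growing fuel. For \<open>x\<close> in the dyadic block \<open>[2^j, 2^(j+1))\<close> wait for the first
  stage at which at least \<open>(p/q) 2^(j+1)\<close> numbers below \<open>2^(j+1)\<close> have been enumerated;
  for large \<open>j\<close> this stage exists because the density of \<open>A\<close> below \<open>2^(j+1)\<close> is close to
  \<open>d > p/q\<close>. Put \<open>x\<close> into \<open>B\<close> iff it has been enumerated by that stage. Since the
  fuel-bounded evaluator is itself total recursive, \<open>B\<close> is computable, and \<open>B \<subseteq> A\<close>.
  Inside the block \<open>B\<close> misses at most \<open>|A \<inter> [0, 2^(j+1))| - (p/q) 2^(j+1) \<approx> (d - p/q) 2^(j+1)\<close>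
  elements of \<open>A\<close>, and summing these defects over the blocks bounds the upper density of
  \<open>A - B\<close> by a constant multiple of \<open>d - p/q\<close>.\<close>

section \<open>Step-bounded evaluation\<close>

definition prim_rec_opt ::
    "(nat list \<Rightarrow> nat option) \<Rightarrow> (nat list \<Rightarrow> nat option) \<Rightarrow> nat \<Rightarrow> nat list \<Rightarrow> nat option" where
  "prim_rec_opt F G n ys = rec_nat (F ys) (\<lambda>m r. case r of None \<Rightarrow> None | Some z \<Rightarrow> G (z # m # ys)) n"

definition min_search :: "nat \<Rightarrow> (nat list \<Rightarrow> nat option) \<Rightarrow> nat list \<Rightarrow> nat" where
  "min_search s F xs = (LEAST m. s \<le> m \<or> (case F (m # xs) of Some (Suc _) \<Rightarrow> False | _ \<Rightarrow> True))"

definition minimize_opt :: "nat \<Rightarrow> (nat list \<Rightarrow> nat option) \<Rightarrow> nat list \<Rightarrow> nat option" where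
  "minimize_opt s F xs =
     (if min_search s F xs < s \<and> F (min_search s F xs # xs) = Some 0 then Some (min_search s F xs) else None)"

text \<open>\<open>eval_fuel s\<close> is \<open>eval\<close> with every unbounded search cut off at \<open>s\<close>; \<open>None\<close> means
  that the cut-off was hit or the arguments were ill-formed.\<close>

fun eval_fuel :: "nat \<Rightarrow> recf \<Rightarrow> nat list \<Rightarrow> nat option" where
  "eval_fuel s Zr xs = Some 0"
| "eval_fuel s Sc xs = (case xs of [] \<Rightarrow> None | x # _ \<Rightarrow> Some (Suc x))"
| "eval_fuel s (Id i) xs = (if i < length xs then Some (xs ! i) else None)"
| "eval_fuel s (Cn f gs) xs =
     (if \<exists>g\<in>set gs. eval_fuel s g xs = None then None
      else eval_fuel s f (map (\<lambda>g. the (eval_fuel s g xs)) gs))"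
| "eval_fuel s (Pr f g) xs =
     (case xs of [] \<Rightarrow> None | n # ys \<Rightarrow> prim_rec_opt (eval_fuel s f) (eval_fuel s g) n ys)"
| "eval_fuel s (Mn f) xs = minimize_opt s (eval_fuel s f) xs"

lemma prim_rec_opt_0 [simp]: "prim_rec_opt F G 0 ys = F ys"
  by (simp add: prim_rec_opt_def)

lemma prim_rec_opt_Suc [simp]:
  "prim_rec_opt F G (Suc n) ys = (case prim_rec_opt F G n ys of None \<Rightarrow> None | Some z \<Rightarrow> G (z # n # ys))"
  by (simp add: prim_rec_opt_def)

lemma min_search_stops:
  "s \<le> min_search s F xs \<or> (case F (min_search s F xs # xs) of Some (Suc _) \<Rightarrow> False | _ \<Rightarrow> True)"
  unfolding min_search_def by (rule LeastI[of _ s]) simp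

lemma less_min_search:
  assumes "m < min_search s F xs"
  shows "m < s \<and> (\<exists>k. F (m # xs) = Some (Suc k))"
proof -
  have "\<not> (s \<le> m \<or> (case F (m # xs) of Some (Suc _) \<Rightarrow> False | _ \<Rightarrow> True))"
    using not_less_Least[OF assms[unfolded min_search_def]] .
  then show ?thesis by (auto split: option.splits nat.splits)
qed

lemma min_search_le:
  "s \<le> m \<or> (case F (m # xs) of Some (Suc _) \<Rightarrow> False | _ \<Rightarrow> True) \<Longrightarrow> min_search s F xs \<le> m"
  unfolding min_search_def by (rule Least_le)

lemma eval_fuel_MnI:
  assumes "eval_fuel s f (n # xs) = Some 0" "\<forall>m<n. \<exists>k. eval_fuel s f (m # xs) = Some (Suc k)" "n < s"
  shows "eval_fuel s (Mn f) xs = Some n"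
proof -
  have "min_search s (eval_fuel s f) xs \<le> n" by (rule min_search_le) (simp add: assms(1))
  moreover have "\<not> min_search s (eval_fuel s f) xs < n"
    using min_search_stops[of s "eval_fuel s f" xs] assms(2,3) by auto
  ultimately have "min_search s (eval_fuel s f) xs = n" by simp
  then show ?thesis using assms(1,3) by (simp add: minimize_opt_def)
qed

lemma eval_fuel_sound: "eval_fuel s f xs = Some y \<Longrightarrow> eval f xs y"
proof (induction f arbitrary: xs y)
  case (Cn f gs)
  let ?ys = "map (\<lambda>g. the (eval_fuel s g xs)) gs"
  have defined: "\<forall>g\<in>set gs. eval_fuel s g xs \<noteq> None" and "eval_fuel s f ?ys = Some y"
    using Cn.prems by (auto split: if_splits)
  show ?case
  proof (rule eval_Cn[of ?ys])
    show "\<forall>i<length gs. eval (gs ! i) xs (?ys ! i)"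
    proof (intro allI impI)
      fix i assume i: "i < length gs"
      then have "gs ! i \<in> set gs" by simp
      with defined Cn.IH(2) i show "eval (gs ! i) xs (?ys ! i)" by fastforce
    qed
  qed (use Cn.IH(1) \<open>eval_fuel s f ?ys = Some y\<close> in auto)
next
  case (Pr f g)
  then obtain n ys where xs: "xs = n # ys" by (cases xs) auto
  have "prim_rec_opt (eval_fuel s f) (eval_fuel s g) n ys = Some y \<Longrightarrow> eval (Pr f g) (n # ys) y" for y
  proof (induction n arbitrary: y)
    case 0
    then show ?case using Pr.IH(1) by (auto intro: eval.intros)
  next
    case (Suc n)
    then obtain z where "prim_rec_opt (eval_fuel s f) (eval_fuel s g) n ys = Some z"
      and "eval_fuel s g (z # n # ys) = Some y"
      by (auto split: option.splits)
    then show ?case using Suc.IH Pr.IH(2) by (blast intro: eval_PrS)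
  qed
  then show ?case using Pr.prems xs by simp
next
  case (Mn f)
  let ?T = "min_search s (eval_fuel s f) xs"
  have "eval_fuel s f (?T # xs) = Some 0" and y: "y = ?T"
    using Mn.prems by (auto simp: minimize_opt_def split: if_splits)
  then show ?case using Mn.IH less_min_search by (blast intro: eval_Mn)
qed (auto intro: eval.intros split: list.splits if_splits)

lemma eval_fuel_mono: "eval_fuel s f xs = Some y \<Longrightarrow> s \<le> t \<Longrightarrow> eval_fuel t f xs = Some y"
proof (induction f arbitrary: xs y)
  case (Cn f gs)
  have defined: "\<forall>g\<in>set gs. eval_fuel s g xs \<noteq> None"
    and f: "eval_fuel s f (map (\<lambda>g. the (eval_fuel s g xs)) gs) = Some y"
    using Cn.prems by (auto split: if_splits)
  have same: "\<forall>g\<in>set gs. eval_fuel t g xs = eval_fuel s g xs"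
    using defined Cn.IH(2) Cn.prems(2) by fastforce
  then have "map (\<lambda>g. the (eval_fuel t g xs)) gs = map (\<lambda>g. the (eval_fuel s g xs)) gs"
    by simp
  moreover have "\<not> (\<exists>g\<in>set gs. eval_fuel t g xs = None)" using defined same by simp
  ultimately show ?case using Cn.IH(1)[OF f Cn.prems(2)] by (simp only: eval_fuel.simps if_False)
next
  case (Pr f g)
  then obtain n ys where xs: "xs = n # ys" by (cases xs) auto
  have "prim_rec_opt (eval_fuel s f) (eval_fuel s g) n ys = Some y
    \<Longrightarrow> prim_rec_opt (eval_fuel t f) (eval_fuel t g) n ys = Some y" for y
  proof (induction n arbitrary: y)
    case (Suc n)
    then obtain z where "prim_rec_opt (eval_fuel s f) (eval_fuel s g) n ys = Some z"
      and "eval_fuel s g (z # n # ys) = Some y"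
      by (auto split: option.splits)
    then show ?case using Suc.IH Pr.IH(2) Pr.prems(2) by simp
  qed (use Pr.IH(1) Pr.prems(2) in auto)
  then show ?case using Pr.prems xs by simp
next
  case (Mn f)
  let ?T = "min_search s (eval_fuel s f) xs"
  have T: "?T < s" "eval_fuel s f (?T # xs) = Some 0" and y: "y = ?T"
    using Mn.prems by (auto simp: minimize_opt_def split: if_splits)
  have below: "\<forall>m<?T. \<exists>k. eval_fuel s f (m # xs) = Some (Suc k)" using less_min_search by blast
  show ?case unfolding y
  proof (rule eval_fuel_MnI)
    show "eval_fuel t f (?T # xs) = Some 0" using Mn.IH Mn.prems(2) T by blast
    show "\<forall>m<?T. \<exists>k. eval_fuel t f (m # xs) = Some (Suc k)" using below Mn.IH Mn.prems(2) by blast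
    show "?T < t" using T Mn.prems(2) by simp
  qed
qed auto

lemma eval_fuel_mono_finite:
  assumes "finite I" "\<And>i. i \<in> I \<Longrightarrow> eval_fuel (S i) (F i) (X i) = Some (Y i)"
  shows "\<exists>s. \<forall>i\<in>I. eval_fuel s (F i) (X i) = Some (Y i)"
proof (intro exI ballI)
  fix i assume "i \<in> I"
  show "eval_fuel (Max (S ` I)) (F i) (X i) = Some (Y i)"
  proof (rule eval_fuel_mono)
    show "eval_fuel (S i) (F i) (X i) = Some (Y i)" using assms(2) \<open>i \<in> I\<close> .
    show "S i \<le> Max (S ` I)" using assms(1) \<open>i \<in> I\<close> by simp
  qed
qed

lemma eval_fuel_complete: "eval f xs y \<Longrightarrow> \<exists>s. eval_fuel s f xs = Some y"
proof (induction rule: eval.induct)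
  case (eval_Cn ys gs xs f y)
  have "\<forall>i<length gs. \<exists>s. eval_fuel s (gs ! i) xs = Some (ys ! i)" using eval_Cn.IH(1) by blast
  then obtain S where "\<forall>i<length gs. eval_fuel (S i) (gs ! i) xs = Some (ys ! i)" by metis
  then obtain s1 where s1: "\<forall>i<length gs. eval_fuel s1 (gs ! i) xs = Some (ys ! i)"
    using eval_fuel_mono_finite[of "{..<length gs}" S "(!) gs" "\<lambda>_. xs" "(!) ys"] by auto
  obtain s0 where s0: "eval_fuel s0 f ys = Some y" using eval_Cn.IH(2) by blast
  define s where "s = max s0 s1"
  have gs: "\<forall>i<length gs. eval_fuel s (gs ! i) xs = Some (ys ! i)"
    using s1 by (auto simp: s_def intro: eval_fuel_mono[of s1])
  have f: "eval_fuel s f ys = Some y" using eval_fuel_mono[OF s0] by (simp add: s_def)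
  have "\<not> (\<exists>g\<in>set gs. eval_fuel s g xs = None)" using gs by (auto simp: in_set_conv_nth)
  moreover have "map (\<lambda>g. the (eval_fuel s g xs)) gs = ys"
    by (rule nth_equalityI) (use gs eval_Cn.hyps(1) in auto)
  ultimately show ?case using f by (intro exI[of _ s]) simp
next
  case (eval_PrS f g n xs z y)
  then obtain s1 s2 where "eval_fuel s1 (Pr f g) (n # xs) = Some z" "eval_fuel s2 g (z # n # xs) = Some y"
    by blast
  then have "eval_fuel (max s1 s2) (Pr f g) (n # xs) = Some z" "eval_fuel (max s1 s2) g (z # n # xs) = Some y"
    using eval_fuel_mono[OF _ max.cobounded1] eval_fuel_mono[OF _ max.cobounded2] by blast+
  then show ?case by (intro exI[of _ "max s1 s2"]) simp
next
  case (eval_Mn f n xs)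
  obtain s0 where s0: "eval_fuel s0 f (n # xs) = Some 0" using eval_Mn.IH(1) by blast
  have "\<forall>m<n. \<exists>s k. eval_fuel s f (m # xs) = Some (Suc k)" using eval_Mn.IH(2) by blast
  then obtain S K where "\<forall>m<n. eval_fuel (S m) f (m # xs) = Some (Suc (K m))" by metis
  then obtain s1 where below: "\<forall>m<n. eval_fuel s1 f (m # xs) = Some (Suc (K m))"
    using eval_fuel_mono_finite[of "{..<n}" S "\<lambda>_. f" "\<lambda>m. m # xs" "\<lambda>m. Suc (K m)"] by auto
  define s where "s = max (Suc n) (max s0 s1)"
  have "\<forall>m<n. eval_fuel s f (m # xs) = Some (Suc (K m))"
    using below by (auto simp: s_def intro: eval_fuel_mono[of s1])
  moreover have "eval_fuel s f (n # xs) = Some 0" using eval_fuel_mono[OF s0] s_def by simp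
  ultimately show ?case by (intro exI[of _ s] eval_fuel_MnI) (auto simp: s_def)
next
  case (eval_Pr0 f xs y g)
  then show ?case by simp
qed (auto intro: exI[of _ 0])

section \<open>Total recursive functions\<close>

definition total_recursive :: "nat \<Rightarrow> (nat list \<Rightarrow> nat) \<Rightarrow> bool" where
  "total_recursive k g \<longleftrightarrow> (\<exists>f. \<forall>xs. length xs = k \<longrightarrow> eval f xs (g xs))"

lemma total_recursive_cong:
  "total_recursive k g \<Longrightarrow> (\<And>xs. length xs = k \<Longrightarrow> g xs = h xs) \<Longrightarrow> total_recursive k h"
  unfolding total_recursive_def by metis

lemma total_recursive_const: "total_recursive k (\<lambda>_. c)"
proof (induction c)
  case 0
  show ?case unfolding total_recursive_def by (auto intro!: exI[of _ Zr] eval.intros)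
next
  case (Suc c)
  then obtain f where f: "\<forall>xs. length xs = k \<longrightarrow> eval f xs c" unfolding total_recursive_def by blast
  show ?case unfolding total_recursive_def
    by (rule exI[of _ "Cn Sc [f]"]) (auto intro!: eval_Cn[of "[c]"] eval.intros f[rule_format])
qed

lemma total_recursive_nth: "i < k \<Longrightarrow> total_recursive k (\<lambda>xs. xs ! i)"
  unfolding total_recursive_def by (auto intro!: exI[of _ "Id i"] eval.intros)

lemma total_recursive_compose:
  assumes h: "total_recursive (length gs) h" and gs: "\<forall>g\<in>set gs. total_recursive k g"
  shows "total_recursive k (\<lambda>xs. h (map (\<lambda>g. g xs) gs))"
proof -
  obtain fh where fh: "\<forall>ys. length ys = length gs \<longrightarrow> eval fh ys (h ys)"
    using h unfolding total_recursive_def by blast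
  have "\<forall>g\<in>set gs. \<exists>f. \<forall>xs. length xs = k \<longrightarrow> eval f xs (g xs)"
    using gs unfolding total_recursive_def by blast
  then obtain F where F: "\<forall>g\<in>set gs. \<forall>xs. length xs = k \<longrightarrow> eval (F g) xs (g xs)" by metis
  show ?thesis unfolding total_recursive_def
  proof (intro exI[of _ "Cn fh (map F gs)"] allI impI)
    fix xs :: "nat list" assume "length xs = k"
    then show "eval (Cn fh (map F gs)) xs (h (map (\<lambda>g. g xs) gs))"
      by (intro eval_Cn[of "map (\<lambda>g. g xs) gs"]) (use F fh in auto)
  qed
qed

lemma total_recursive_compose1:
  "total_recursive 1 h \<Longrightarrow> total_recursive k g \<Longrightarrow> total_recursive k (\<lambda>xs. h [g xs])"
  using total_recursive_compose[of "[g]" h k] by simp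

lemma total_recursive_compose2:
  "total_recursive 2 h \<Longrightarrow> total_recursive k g1 \<Longrightarrow> total_recursive k g2
    \<Longrightarrow> total_recursive k (\<lambda>xs. h [g1 xs, g2 xs])"
  using total_recursive_compose[of "[g1, g2]" h k] by (simp add: numeral_2_eq_2)

lemma total_recursive_Suc: "total_recursive k f \<Longrightarrow> total_recursive k (\<lambda>xs. Suc (f xs))"
proof -
  have "total_recursive 1 (\<lambda>xs. Suc (xs ! 0))"
    unfolding total_recursive_def by (rule exI[of _ Sc]) (auto simp: length_Suc_conv intro: eval.intros)
  then show "total_recursive k f \<Longrightarrow> total_recursive k (\<lambda>xs. Suc (f xs))"
    using total_recursive_compose1 by fastforce
qed

lemma total_recursive_rec_nat:
  assumes g0: "total_recursive k g0" and h: "total_recursive (Suc (Suc k)) h"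
  shows "total_recursive (Suc k) (\<lambda>xs. rec_nat (g0 (tl xs)) (\<lambda>m r. h (r # m # tl xs)) (hd xs))"
proof -
  obtain F where F: "\<forall>xs. length xs = k \<longrightarrow> eval F xs (g0 xs)"
    using g0 unfolding total_recursive_def by blast
  obtain H where H: "\<forall>xs. length xs = Suc (Suc k) \<longrightarrow> eval H xs (h xs)"
    using h unfolding total_recursive_def by blast
  have Pr: "length ys = k \<Longrightarrow> eval (Pr F H) (n # ys) (rec_nat (g0 ys) (\<lambda>m r. h (r # m # ys)) n)" for n ys
    by (induction n) (use F H in \<open>auto intro: eval.intros\<close>)
  show ?thesis unfolding total_recursive_def
  proof (intro exI[of _ "Pr F H"] allI impI)
    fix xs :: "nat list" assume "length xs = Suc k"
    then show "eval (Pr F H) xs (rec_nat (g0 (tl xs)) (\<lambda>m r. h (r # m # tl xs)) (hd xs))"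
      using Pr by (cases xs) auto
  qed
qed

lemma total_recursive_Least:
  assumes g: "total_recursive (Suc k) g" and ex: "\<And>xs. length xs = k \<Longrightarrow> \<exists>n. g (n # xs) = 0"
  shows "total_recursive k (\<lambda>xs. LEAST n. g (n # xs) = 0)"
proof -
  obtain G where G: "\<forall>xs. length xs = Suc k \<longrightarrow> eval G xs (g xs)"
    using g unfolding total_recursive_def by blast
  show ?thesis unfolding total_recursive_def
  proof (intro exI[of _ "Mn G"] allI impI)
    fix xs :: "nat list" assume xs: "length xs = k"
    let ?n = "LEAST n. g (n # xs) = 0"
    have "eval G (?n # xs) 0"
      using G xs LeastI_ex[OF ex[OF xs]] by (metis length_Cons)
    moreover have "\<exists>j. eval G (m # xs) (Suc j)" if "m < ?n" for m
    proof -
      have "g (m # xs) \<noteq> 0" using not_less_Least[OF that] .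
      then show ?thesis using G xs by (metis length_Cons not0_implies_Suc)
    qed
    ultimately show "eval (Mn G) xs ?n" by (auto intro!: eval_Mn)
  qed
qed

lemma total_recursive_binary_rec_nat:
  assumes "total_recursive 1 g0" and "total_recursive 3 h"
  shows "total_recursive 2 (\<lambda>xs. rec_nat (g0 [xs ! 1]) (\<lambda>m r. h [r, m, xs ! 1]) (xs ! 0))"
proof -
  have "total_recursive (Suc 1) (\<lambda>xs. rec_nat (g0 (tl xs)) (\<lambda>m r. h (r # m # tl xs)) (hd xs))"
    using assms by (intro total_recursive_rec_nat) (simp_all add: numeral_3_eq_3)
  then have "total_recursive (Suc 1) (\<lambda>xs. rec_nat (g0 [xs ! 1]) (\<lambda>m r. h [r, m, xs ! 1]) (xs ! 0))"
  proof (rule total_recursive_cong)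
    fix xs :: "nat list" assume "length xs = Suc 1"
    then obtain a b where "xs = [a, b]" by (auto simp: length_Suc_conv)
    then show "rec_nat (g0 (tl xs)) (\<lambda>m r. h (r # m # tl xs)) (hd xs)
      = rec_nat (g0 [xs ! 1]) (\<lambda>m r. h [r, m, xs ! 1]) (xs ! 0)" by simp
  qed
  then show ?thesis by (simp add: numeral_2_eq_2)
qed

lemma total_recursive_add:
  "total_recursive k f \<Longrightarrow> total_recursive k g \<Longrightarrow> total_recursive k (\<lambda>xs. f xs + g xs)"
proof -
  have "rec_nat b (\<lambda>m r. Suc r) a = a + b" for a b :: nat by (induction a) auto
  moreover have "total_recursive 2 (\<lambda>xs. rec_nat (xs ! 1) (\<lambda>m r. Suc r) (xs ! 0))"
    using total_recursive_binary_rec_nat[of "\<lambda>xs. xs ! 0" "\<lambda>xs. Suc (xs ! 0)"]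
    by (simp add: total_recursive_nth total_recursive_Suc)
  ultimately show "total_recursive k f \<Longrightarrow> total_recursive k g \<Longrightarrow> total_recursive k (\<lambda>xs. f xs + g xs)"
    using total_recursive_compose2[of "\<lambda>xs. xs ! 0 + xs ! 1"] by simp
qed

lemma total_recursive_mult:
  "total_recursive k f \<Longrightarrow> total_recursive k g \<Longrightarrow> total_recursive k (\<lambda>xs. f xs * g xs)"
proof -
  have "rec_nat 0 (\<lambda>m r. r + b) a = a * b" for a b :: nat by (induction a) auto
  moreover have "total_recursive 2 (\<lambda>xs. rec_nat 0 (\<lambda>m r. r + xs ! 1) (xs ! 0))"
    using total_recursive_binary_rec_nat[of "\<lambda>_. 0" "\<lambda>xs. xs ! 0 + xs ! 2"]
    by (simp add: total_recursive_const total_recursive_add total_recursive_nth)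
  ultimately show "total_recursive k f \<Longrightarrow> total_recursive k g \<Longrightarrow> total_recursive k (\<lambda>xs. f xs * g xs)"
    using total_recursive_compose2[of "\<lambda>xs. xs ! 0 * xs ! 1"] by simp
qed

lemma total_recursive_diff:
  "total_recursive k f \<Longrightarrow> total_recursive k g \<Longrightarrow> total_recursive k (\<lambda>xs. f xs - g xs)"
proof -
  have "rec_nat 0 (\<lambda>m r. m) a = a - 1" for a :: nat by (induction a) auto
  moreover have "total_recursive (Suc 0) (\<lambda>xs. rec_nat 0 (\<lambda>m r. m) (hd xs))"
    using total_recursive_rec_nat[of 0 "\<lambda>_. 0" "\<lambda>xs. xs ! 1"]
    by (simp add: total_recursive_const total_recursive_nth)
  ultimately have pred: "total_recursive 1 (\<lambda>xs. xs ! 0 - 1)"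
    by (auto elim!: total_recursive_cong simp: length_Suc_conv)
  have "rec_nat b (\<lambda>m r. r - 1) a = b - a" for a b :: nat by (induction a) auto
  moreover have "total_recursive 2 (\<lambda>xs. rec_nat (xs ! 1) (\<lambda>m r. r - 1) (xs ! 0))"
    using total_recursive_binary_rec_nat[of "\<lambda>xs. xs ! 0" "\<lambda>xs. xs ! 0 - 1"]
      total_recursive_compose1[OF pred total_recursive_nth[of 0 3]]
    by (simp add: total_recursive_nth)
  ultimately show "total_recursive k f \<Longrightarrow> total_recursive k g \<Longrightarrow> total_recursive k (\<lambda>xs. f xs - g xs)"
    using total_recursive_compose2[of "\<lambda>xs. xs ! 1 - xs ! 0" k g f] by simp
qed

lemma total_recursive_If_zero:
  assumes "total_recursive k c" "total_recursive k f" "total_recursive k g"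
  shows "total_recursive k (\<lambda>xs. if c xs = 0 then f xs else g xs)"
proof -
  have "total_recursive k (\<lambda>xs. (1 - c xs) * f xs + (1 - (1 - c xs)) * g xs)"
    using assms by (intro total_recursive_add total_recursive_mult total_recursive_diff total_recursive_const)
  then show ?thesis by (rule total_recursive_cong) simp
qed

lemma total_recursive_prod_list:
  "(\<And>g. g \<in> set gs \<Longrightarrow> total_recursive k (G g)) \<Longrightarrow> total_recursive k (\<lambda>xs. \<Prod>g\<leftarrow>gs. G g xs)"
  by (induction gs) (simp_all add: total_recursive_const total_recursive_mult)

lemma total_recursive_prefix:
  assumes h: "total_recursive (length gs + (k - i)) h" and gs: "\<forall>g\<in>set gs. total_recursive k g"
    and "i \<le> k"
  shows "total_recursive k (\<lambda>xs. h (map (\<lambda>g. g xs) gs @ drop i xs))"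
proof -
  let ?L = "gs @ map (\<lambda>j xs. xs ! j) [i..<k]"
  have "total_recursive k (\<lambda>xs. h (map (\<lambda>g. g xs) ?L))"
    using assms by (intro total_recursive_compose) (auto intro: total_recursive_nth)
  then show ?thesis
  proof (rule total_recursive_cong)
    fix xs :: "nat list" assume "length xs = k"
    then have "map (\<lambda>j. xs ! j) [i..<k] = drop i xs" by (intro nth_equalityI) auto
    then show "h (map (\<lambda>g. g xs) ?L) = h (map (\<lambda>g. g xs) gs @ drop i xs)" by (simp add: comp_def)
  qed
qed

lemma computable_setI: "total_recursive 1 (\<lambda>xs. if xs ! 0 \<in> B then 1 else 0) \<Longrightarrow> computable_set B"
  unfolding total_recursive_def computable_set_def by (metis One_nat_def length_Cons list.size(3) nth_Cons_0)

section \<open>The step-bounded evaluator is total recursive\<close>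

definition encode_option :: "nat option \<Rightarrow> nat" where
  "encode_option r = (case r of None \<Rightarrow> 0 | Some y \<Rightarrow> Suc y)"

lemma encode_option_simps [simp]: "encode_option None = 0" "encode_option (Some y) = Suc y"
  by (simp_all add: encode_option_def)

lemma encode_option_eq_0_iff [simp]: "encode_option r = 0 \<longleftrightarrow> r = None"
  by (cases r) simp_all

definition eval_fuel_code :: "recf \<Rightarrow> nat list \<Rightarrow> nat" where
  "eval_fuel_code f xs = encode_option (eval_fuel (hd xs) f (tl xs))"

lemma eval_fuel_code_Cons [simp]: "eval_fuel_code f (s # xs) = encode_option (eval_fuel s f xs)"
  by (simp add: eval_fuel_code_def)

lemma total_recursive_eval_fuel_code_Cn:
  assumes f: "total_recursive (Suc (length gs)) (eval_fuel_code f)"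
    and gs: "\<And>g. g \<in> set gs \<Longrightarrow> total_recursive (Suc k) (eval_fuel_code g)"
  shows "total_recursive (Suc k) (eval_fuel_code (Cn f gs))"
proof -
  let ?args = "\<lambda>xs. xs ! 0 # map (\<lambda>g. eval_fuel_code g xs - 1) gs"
  have "total_recursive (Suc k) (\<lambda>xs. eval_fuel_code f (map (\<lambda>h. h xs)
      ((\<lambda>xs. xs ! 0) # map (\<lambda>g xs. eval_fuel_code g xs - 1) gs)))"
    using f gs by (intro total_recursive_compose)
      (auto intro: total_recursive_nth total_recursive_diff total_recursive_const)
  then have "total_recursive (Suc k) (\<lambda>xs. if (\<Prod>g\<leftarrow>gs. eval_fuel_code g xs) = 0 then 0
      else eval_fuel_code f (?args xs))"
    using gs by (intro total_recursive_If_zero total_recursive_const total_recursive_prod_list) (simp_all add: comp_def)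
  then show ?thesis
  proof (rule total_recursive_cong)
    fix xs :: "nat list" assume "length xs = Suc k"
    then obtain s ys where xs: "xs = s # ys" by (cases xs) auto
    show "(if (\<Prod>g\<leftarrow>gs. eval_fuel_code g xs) = 0 then 0 else eval_fuel_code f (?args xs))
      = eval_fuel_code (Cn f gs) xs"
    proof (cases "\<exists>g\<in>set gs. eval_fuel s g ys = None")
      case True
      then show ?thesis using xs by (force simp: prod_list_zero_iff)
    next
      case False
      then have args: "map (\<lambda>g. eval_fuel_code g (s # ys) - 1) gs = map (\<lambda>g. the (eval_fuel s g ys)) gs"
        by (intro map_cong) auto
      show ?thesis unfolding xs args using False by (auto simp: prod_list_zero_iff)
    qed
  qed
qed

lemma encode_prim_rec_opt:
  "encode_option (prim_rec_opt F G n ys) =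
     rec_nat (encode_option (F ys)) (\<lambda>m r. if r = 0 then 0 else encode_option (G ((r - 1) # m # ys))) n"
proof (induction n)
  case (Suc n)
  have "encode_option (prim_rec_opt F G (Suc n) ys) = (let r = encode_option (prim_rec_opt F G n ys) in
      if r = 0 then 0 else encode_option (G ((r - 1) # n # ys)))"
    by (cases "prim_rec_opt F G n ys") simp_all
  then show ?case by (simp add: Suc.IH)
qed simp

lemma total_recursive_eval_fuel_code_Pr:
  assumes f: "total_recursive (Suc k) (eval_fuel_code f)"
    and g: "total_recursive (Suc (Suc (Suc k))) (eval_fuel_code g)"
  shows "total_recursive (Suc (Suc k)) (eval_fuel_code (Pr f g))"
proof -
  define step where
    "step w = (if w ! 0 = 0 then 0 else eval_fuel_code g (w ! 2 # (w ! 0 - 1) # w ! 1 # drop 3 w))" for w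
  have "total_recursive (Suc (Suc (Suc k))) (\<lambda>w. eval_fuel_code g
      (map (\<lambda>h. h w) [\<lambda>w. w ! 2, \<lambda>w. w ! 0 - 1, \<lambda>w. w ! 1] @ drop 3 w))"
    using g by (intro total_recursive_prefix) (auto intro: total_recursive_nth total_recursive_diff total_recursive_const)
  then have "total_recursive (Suc (Suc (Suc k))) step"
    unfolding step_def by (intro total_recursive_If_zero total_recursive_nth total_recursive_const) simp_all
  define rec where "rec xs = rec_nat (eval_fuel_code f (tl xs)) (\<lambda>m r. step (r # m # tl xs)) (hd xs)" for xs
  have "total_recursive (Suc (Suc k)) rec"
    unfolding rec_def using f \<open>total_recursive (Suc (Suc (Suc k))) step\<close> by (rule total_recursive_rec_nat)
  then have "total_recursive (Suc (Suc k)) (\<lambda>xs. rec (map (\<lambda>h. h xs) [\<lambda>xs. xs ! 1, \<lambda>xs. xs ! 0] @ drop 2 xs))"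
    by (intro total_recursive_prefix) (auto intro: total_recursive_nth)
  then show ?thesis
  proof (rule total_recursive_cong)
    fix xs :: "nat list" assume "length xs = Suc (Suc k)"
    then obtain s n ys where "xs = s # n # ys" by (auto simp: length_Suc_conv)
    then show "rec (map (\<lambda>h. h xs) [\<lambda>xs. xs ! 1, \<lambda>xs. xs ! 0] @ drop 2 xs) = eval_fuel_code (Pr f g) xs"
      by (simp add: rec_def step_def encode_prim_rec_opt numeral_2_eq_2 numeral_3_eq_3 cong: if_cong)
  qed
qed

lemma total_recursive_min_search:
  assumes f: "total_recursive (Suc (Suc k)) (eval_fuel_code f)"
  shows "total_recursive (Suc k) (\<lambda>xs. min_search (hd xs) (eval_fuel (hd xs) f) (tl xs))"
proof -
  define F where "F w = eval_fuel_code f (map (\<lambda>h. h w) [\<lambda>w. w ! 1, \<lambda>w. w ! 0] @ drop 2 w)" for w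
  have "total_recursive (Suc (Suc k)) F"
    unfolding F_def using f by (intro total_recursive_prefix) (auto intro: total_recursive_nth)
  then have "total_recursive (Suc (Suc k)) (\<lambda>w. (w ! 1 - w ! 0) * (F w - 1))"
    by (intro total_recursive_mult total_recursive_diff total_recursive_nth total_recursive_const) auto
  then have "total_recursive (Suc k) (\<lambda>xs. LEAST m. ((m # xs) ! 1 - (m # xs) ! 0) * (F (m # xs) - 1) = 0)"
    by (rule total_recursive_Least) (use exI[of _ "hd _"] in \<open>auto simp: length_Suc_conv\<close>)
  then show ?thesis
  proof (rule total_recursive_cong)
    fix xs :: "nat list" assume "length xs = Suc k"
    then obtain s ys where xs: "xs = s # ys" by (cases xs) auto
    have "(\<lambda>m. ((m # xs) ! 1 - (m # xs) ! 0) * (F (m # xs) - 1) = 0)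
      = (\<lambda>m. s \<le> m \<or> (case eval_fuel s f (m # ys) of Some (Suc _) \<Rightarrow> False | _ \<Rightarrow> True))"
      by (rule ext) (auto simp: xs F_def split: option.splits nat.splits)
    then show "(LEAST m. ((m # xs) ! 1 - (m # xs) ! 0) * (F (m # xs) - 1) = 0)
      = min_search (hd xs) (eval_fuel (hd xs) f) (tl xs)"
      unfolding min_search_def by (simp add: xs)
  qed
qed

lemma total_recursive_eval_fuel_code_Mn:
  assumes f: "total_recursive (Suc (Suc k)) (eval_fuel_code f)"
  shows "total_recursive (Suc k) (eval_fuel_code (Mn f))"
proof -
  define search where "search xs = min_search (hd xs) (eval_fuel (hd xs) f) (tl xs)" for xs
  have search: "total_recursive (Suc k) search"
    unfolding search_def using f by (rule total_recursive_min_search)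
  define c where "c xs = eval_fuel_code f (map (\<lambda>h. h xs) [\<lambda>xs. xs ! 0, search] @ drop 1 xs)" for xs
  have "total_recursive (Suc k) c"
    unfolding c_def using f search by (intro total_recursive_prefix) (auto intro: total_recursive_nth)
  \<comment> \<open>The test vanishes iff the search stopped below the fuel at \<open>Some 0\<close>, encoded as \<open>c = 1\<close>.\<close>
  then have "total_recursive (Suc k)
      (\<lambda>xs. if (1 - (xs ! 0 - search xs)) + (c xs - 1) + (1 - c xs) = 0 then Suc (search xs) else 0)"
    using search
    by (intro total_recursive_If_zero total_recursive_add total_recursive_diff total_recursive_const
        total_recursive_nth total_recursive_Suc) auto
  then show ?thesis
  proof (rule total_recursive_cong)
    fix xs :: "nat list" assume "length xs = Suc k"
    then obtain s ys where xs: "xs = s # ys" by (cases xs) auto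
    show "(if (1 - (xs ! 0 - search xs)) + (c xs - 1) + (1 - c xs) = 0 then Suc (search xs) else 0)
      = eval_fuel_code (Mn f) xs"
      by (cases "eval_fuel s f (min_search s (eval_fuel s f) ys # ys)")
        (auto simp: xs c_def search_def minimize_opt_def)
  qed
qed

lemma total_recursive_eval_fuel_code: "total_recursive (Suc k) (eval_fuel_code f)"
proof (induction f arbitrary: k)
  case Zr
  show ?case by (rule total_recursive_cong[OF total_recursive_const[of _ 1]]) (auto simp: eval_fuel_code_def)
next
  case Sc
  have "total_recursive (Suc k) (\<lambda>xs. if k = 0 then 0 else Suc (Suc (xs ! 1)))"
    by (cases k) (simp_all add: total_recursive_const total_recursive_Suc total_recursive_nth)
  then show ?case
    by (rule total_recursive_cong) (auto simp: eval_fuel_code_def length_Suc_conv split: list.splits)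
next
  case (Id i)
  have "total_recursive (Suc k) (\<lambda>xs. if i < k then Suc (xs ! Suc i) else 0)"
    by (cases "i < k") (simp_all add: total_recursive_const total_recursive_Suc total_recursive_nth)
  then show ?case
    by (rule total_recursive_cong) (auto simp: eval_fuel_code_def length_Suc_conv)
next
  case (Cn f gs)
  then show ?case by (intro total_recursive_eval_fuel_code_Cn) auto
next
  case (Pr f g)
  show ?case
  proof (cases k)
    case 0
    show ?thesis
      by (rule total_recursive_cong[OF total_recursive_const[of _ 0]]) (auto simp: 0 length_Suc_conv)
  next
    case (Suc j)
    then show ?thesis using Pr.IH total_recursive_eval_fuel_code_Pr by simp
  qed
next
  case (Mn f)
  then show ?case by (intro total_recursive_eval_fuel_code_Mn)
qed

section \<open>Upper density from dyadic blocks\<close>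

lemma card_dyadic_prefix_le_of_blocks:
  fixes X :: "nat set" and c :: real
  assumes "0 \<le> c" and blocks: "\<And>j. J \<le> j \<Longrightarrow> real (card (X \<inter> {2 ^ j..<2 ^ Suc j})) \<le> c * 2 ^ j"
  shows "real (card (X \<inter> {0..<2 ^ (J + i)})) \<le> 2 ^ J + c * 2 ^ (J + i)"
proof (induction i)
  case 0
  have "real (card (X \<inter> {0..<2 ^ J})) \<le> real (card {0..<(2::nat) ^ J})"
    by (intro of_nat_mono card_mono) auto
  then show ?case using \<open>0 \<le> c\<close> by (simp add: add_increasing2)
next
  case (Suc i)
  have "X \<inter> {0..<2 ^ (J + Suc i)} = X \<inter> {0..<2 ^ (J + i)} \<union> X \<inter> {2 ^ (J + i)..<2 ^ Suc (J + i)}"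
    by auto
  then have "card (X \<inter> {0..<2 ^ (J + Suc i)})
      \<le> card (X \<inter> {0..<2 ^ (J + i)}) + card (X \<inter> {2 ^ (J + i)..<2 ^ Suc (J + i)})"
    by (metis card_Un_le)
  then show ?case using Suc.IH blocks[of "J + i"] by simp
qed

lemma card_prefix_le_of_blocks:
  fixes X :: "nat set" and c :: real
  assumes blocks: "\<And>j. J \<le> j \<Longrightarrow> real (card (X \<inter> {2 ^ j..<2 ^ Suc j})) \<le> c * 2 ^ j"
  shows "real (card (X \<inter> {0..<n})) \<le> 2 ^ J + 2 * c * n"
proof -
  have "0 \<le> c * 2 ^ J" using blocks[of J] by (meson le_refl of_nat_0_le_iff order_trans)
  moreover have "(0::real) < 2 ^ J" by simp
  ultimately have c: "0 \<le> c" by (simp add: zero_le_mult_iff)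
  note dyadic = card_dyadic_prefix_le_of_blocks[where J = J, OF c blocks]
  show ?thesis
  proof (cases "n \<le> 2 ^ J")
    case True
    have "card (X \<inter> {0..<n}) \<le> 2 ^ J" using card_mono[of "{0..<n}" "X \<inter> {0..<n}"] True by simp
    then have "real (card (X \<inter> {0..<n})) \<le> 2 ^ J" by (metis of_nat_le_iff of_nat_numeral of_nat_power)
    then show ?thesis using c by (simp add: add_increasing2)
  next
    case False
    then have "1 \<le> n" using one_le_power[of 2 J] by linarith
    then obtain k where k: "2 ^ k \<le> n" "n < 2 ^ Suc k" using ex_power_ivl1[of 2 n] by auto
    have "J \<le> k"
    proof (rule ccontr)
      assume "\<not> J \<le> k"
      then have "(2::nat) ^ Suc k \<le> 2 ^ J" by (intro power_increasing) auto
      then show False using False k(2) by simp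
    qed
    then obtain i where i: "Suc k = J + i" by (metis add_Suc_right le_add_diff_inverse)
    have "card (X \<inter> {0..<n}) \<le> card (X \<inter> {0..<2 ^ (J + i)})"
      using k(2) unfolding i[symmetric] by (intro card_mono) auto
    then have "real (card (X \<inter> {0..<n})) \<le> 2 ^ J + c * 2 ^ Suc k"
      using dyadic[of i] unfolding i by linarith
    also have "\<dots> \<le> 2 ^ J + 2 * c * n" using k(1) c by (simp add: mult_left_mono)
    finally show ?thesis .
  qed
qed

lemma upper_density_le_of_blocks:
  fixes X :: "nat set" and c :: real
  assumes "\<And>j. J \<le> j \<Longrightarrow> real (card (X \<inter> {2 ^ j..<2 ^ Suc j})) \<le> c * 2 ^ j"
  shows "upper_density X \<le> ereal (2 * c)"
proof -
  have "rho_n X (Suc n) \<le> 2 ^ J / real (Suc n) + 2 * c" for n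
  proof -
    have "rho_n X (Suc n) \<le> (2 ^ J + 2 * c * real (Suc n)) / real (Suc n)"
      unfolding rho_n_def by (intro divide_right_mono card_prefix_le_of_blocks assms) auto
    then show ?thesis by (simp add: add_divide_distrib)
  qed
  then have "upper_density X \<le> limsup (\<lambda>n. ereal (2 ^ J / real (Suc n) + 2 * c))"
    unfolding upper_density_def by (intro Limsup_mono) simp
  also have "\<dots> = ereal (2 * c)"
  proof (rule lim_imp_Limsup)
    have "(\<lambda>n. 2 ^ J * inverse (real (Suc n)) + 2 * c) \<longlonglongrightarrow> 2 ^ J * 0 + 2 * c"
      by (intro tendsto_intros LIMSEQ_inverse_real_of_nat)
    then show "(\<lambda>n. ereal (2 ^ J / real (Suc n) + 2 * c)) \<longlonglongrightarrow> ereal (2 * c)"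
      by (simp add: divide_inverse)
  qed simp
  finally show ?thesis .
qed

lemma upper_density_eq_density:
  "(\<lambda>n. rho_n X (Suc n)) \<longlonglongrightarrow> d \<Longrightarrow> upper_density X = ereal d"
  unfolding upper_density_def by (intro lim_imp_Limsup) simp_all

lemma density_bounds_eventually:
  fixes X :: "nat set" and d \<delta> :: real
  assumes "(\<lambda>n. rho_n X (Suc n)) \<longlonglongrightarrow> d" "0 < \<delta>"
  obtains n0 where "\<And>m. n0 \<le> m
    \<Longrightarrow> (d - \<delta>) * m \<le> card (X \<inter> {0..<m}) \<and> card (X \<inter> {0..<m}) \<le> (d + \<delta>) * m"
proof -
  obtain N0 where N0: "\<forall>n\<ge>N0. norm (rho_n X (Suc n) - d) < \<delta>" using LIMSEQ_D[OF assms] by blast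
  have "(d - \<delta>) * m \<le> card (X \<inter> {0..<m}) \<and> card (X \<inter> {0..<m}) \<le> (d + \<delta>) * m" if "Suc N0 \<le> m" for m
  proof -
    obtain n where n: "m = Suc n" "N0 \<le> n" using \<open>Suc N0 \<le> m\<close> by (cases m) auto
    then have "\<bar>card (X \<inter> {0..<m}) / m - d\<bar> < \<delta>" using N0 by (simp add: rho_n_def)
    then show ?thesis using n by (simp add: abs_less_iff field_simps)
  qed
  then show ?thesis by (rule that)
qed

lemma D_eq_upper_density_diff: "B \<subseteq> A \<Longrightarrow> D A B = upper_density (A - B)"
  unfolding D_def by (metis Diff_eq_empty_iff sup_bot_right)

section \<open>The approximating set\<close>

primrec block_end :: "nat \<Rightarrow> nat" where
  "block_end 0 = 1"
| "block_end (Suc x) = (if Suc x < block_end x then block_end x else 2 * block_end x)"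

definition halted_count :: "recf \<Rightarrow> nat \<Rightarrow> nat \<Rightarrow> nat" where
  "halted_count f s m = card {x. x < m \<and> eval_fuel s f [x] \<noteq> None}"

definition stage :: "recf \<Rightarrow> nat \<Rightarrow> nat \<Rightarrow> nat \<Rightarrow> nat \<Rightarrow> nat" where
  "stage f N p q x = (LEAST s. N \<le> x \<longrightarrow> p * block_end x \<le> q * halted_count f s (block_end x))"

definition block_approx :: "recf \<Rightarrow> nat \<Rightarrow> nat \<Rightarrow> nat \<Rightarrow> nat set" where
  "block_approx f N p q = {x. N \<le> x \<and> eval_fuel (stage f N p q x) f [x] \<noteq> None}"

lemma block_end_bounds: "x < block_end x \<and> block_end x \<le> 2 * x + 1 \<and> (\<exists>i. block_end x = 2 ^ i)"
proof (induction x)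
  case 0
  show ?case by (auto intro: exI[of _ 0])
next
  case (Suc x)
  then obtain i where i: "block_end x = 2 ^ i" by blast
  show ?case
  proof (cases "Suc x < block_end x")
    case True
    then show ?thesis using Suc by auto
  next
    case False
    then have "block_end x = Suc x" using Suc by simp
    then show ?thesis using i by (auto intro: exI[of _ "Suc i"])
  qed
qed

lemma block_end_eq:
  assumes "2 ^ j \<le> x" "x < 2 ^ Suc j"
  shows "block_end x = 2 ^ Suc j"
proof -
  obtain i where i: "block_end x = 2 ^ i" using block_end_bounds by blast
  have "x < 2 ^ i" "2 ^ i \<le> 2 * x + 1" using block_end_bounds[of x] i by auto
  then have "2 ^ j < (2::nat) ^ i" "(2::nat) ^ i < 2 ^ Suc (Suc j)"
    using assms power_Suc[of "2::nat" "Suc j"] by linarith+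
  then have "j < i" "i < Suc (Suc j)" by (simp_all only: power_strict_increasing_iff[of "2::nat"] one_less_numeral_iff semiring_norm(76))
  then have "i = Suc j" by simp
  then show ?thesis using i by simp
qed

lemma halted_count_0 [simp]: "halted_count f s 0 = 0"
  by (simp add: halted_count_def)

lemma halted_count_Suc:
  "halted_count f s (Suc m) = halted_count f s m + (if eval_fuel s f [m] = None then 0 else 1)"
proof -
  have "{x. x < Suc m \<and> eval_fuel s f [x] \<noteq> None} =
      {x. x < m \<and> eval_fuel s f [x] \<noteq> None} \<union> (if eval_fuel s f [m] = None then {} else {m})"
    by (auto simp: less_Suc_eq)
  then show ?thesis by (simp add: halted_count_def)
qed

lemma total_recursive_halted_count: "total_recursive 2 (\<lambda>xs. halted_count f (xs ! 1) (xs ! 0))"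
proof -
  have "total_recursive 3 (\<lambda>w. eval_fuel_code f [w ! 2, w ! 1])"
    using total_recursive_eval_fuel_code[of 1 f]
    by (intro total_recursive_compose2) (simp_all add: numeral_2_eq_2 total_recursive_nth)
  then have "total_recursive 3 (\<lambda>w. w ! 0 + (if eval_fuel_code f [w ! 2, w ! 1] = 0 then 0 else 1))"
    by (intro total_recursive_add total_recursive_If_zero total_recursive_nth total_recursive_const) simp_all
  then have "total_recursive 2 (\<lambda>xs. rec_nat 0
      (\<lambda>m r. r + (if eval_fuel_code f [xs ! 1, m] = 0 then 0 else 1)) (xs ! 0))"
    using total_recursive_binary_rec_nat[of "\<lambda>_. 0"
        "\<lambda>w. w ! 0 + (if eval_fuel_code f [w ! 2, w ! 1] = 0 then 0 else 1)"] total_recursive_const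
    by (simp add: numeral_2_eq_2)
  moreover have "rec_nat 0 (\<lambda>m r. r + (if eval_fuel_code f [s, m] = 0 then 0 else 1)) n = halted_count f s n"
    for s n by (induction n) (simp_all add: halted_count_Suc)
  ultimately show ?thesis by simp
qed

lemma total_recursive_block_end: "total_recursive 1 (\<lambda>xs. block_end (xs ! 0))"
proof -
  have "total_recursive (Suc (Suc 0)) (\<lambda>w. if Suc (Suc (w ! 1)) - w ! 0 = 0 then w ! 0 else 2 * w ! 0)"
    by (intro total_recursive_If_zero total_recursive_diff total_recursive_mult total_recursive_Suc
        total_recursive_nth total_recursive_const) simp_all
  then have "total_recursive (Suc 0) (\<lambda>xs. rec_nat 1
      (\<lambda>m r. if Suc (Suc m) - r = 0 then r else 2 * r) (hd xs))"
    using total_recursive_rec_nat[of 0 "\<lambda>_. 1"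
        "\<lambda>w. if Suc (Suc (w ! 1)) - w ! 0 = 0 then w ! 0 else 2 * w ! 0"] total_recursive_const
    by (simp cong: if_cong)
  moreover have "rec_nat 1 (\<lambda>m r. if Suc (Suc m) - r = 0 then r else 2 * r) n = block_end n" for n
    by (induction n) auto
  ultimately show ?thesis by (auto elim!: total_recursive_cong simp: length_Suc_conv)
qed

lemma total_recursive_stage:
  assumes "\<And>x. \<exists>s. N \<le> x \<longrightarrow> p * block_end x \<le> q * halted_count f s (block_end x)"
  shows "total_recursive 1 (\<lambda>xs. stage f N p q (xs ! 0))"
proof -
  have block_end: "total_recursive 2 (\<lambda>w. block_end (w ! 1))"
    using total_recursive_compose1[OF total_recursive_block_end total_recursive_nth[of 1 2]] by simp
  have count: "total_recursive 2 (\<lambda>w. halted_count f (w ! 0) (block_end (w ! 1)))"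
    using total_recursive_compose2[OF total_recursive_halted_count[of f] block_end total_recursive_nth[of 0 2]]
    by simp
  have "total_recursive (Suc 1) (\<lambda>w. if N - w ! 1 = 0
      then p * block_end (w ! 1) - q * halted_count f (w ! 0) (block_end (w ! 1)) else 0)"
    using count block_end
    by (intro total_recursive_If_zero total_recursive_diff total_recursive_mult total_recursive_const
        total_recursive_nth) (simp_all add: numeral_2_eq_2)
  then have "total_recursive 1 (\<lambda>xs. LEAST s. (if N - (s # xs) ! 1 = 0 then p * block_end ((s # xs) ! 1)
      - q * halted_count f ((s # xs) ! 0) (block_end ((s # xs) ! 1)) else 0) = 0)"
    by (rule total_recursive_Least) (use assms in \<open>auto simp: length_Suc_conv\<close>)
  then show ?thesis
    by (rule total_recursive_cong) (simp add: stage_def cong: if_cong)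
qed

lemma computable_set_block_approxI:
  assumes "\<And>x. \<exists>s. N \<le> x \<longrightarrow> p * block_end x \<le> q * halted_count f s (block_end x)"
  shows "computable_set (block_approx f N p q)"
proof (rule computable_setI)
  have "total_recursive 1 (\<lambda>xs. eval_fuel_code f [stage f N p q (xs ! 0), xs ! 0])"
    using total_recursive_eval_fuel_code[of 1 f] total_recursive_stage[OF assms]
    by (intro total_recursive_compose2) (simp_all add: numeral_2_eq_2 total_recursive_nth)
  then have "total_recursive 1 (\<lambda>xs. if N - xs ! 0 = 0
      then (if eval_fuel_code f [stage f N p q (xs ! 0), xs ! 0] = 0 then 0 else 1) else 0)"
    by (intro total_recursive_If_zero total_recursive_diff total_recursive_nth total_recursive_const) simp_all
  then show "total_recursive 1 (\<lambda>xs. if xs ! 0 \<in> block_approx f N p q then 1 else 0)"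
    by (rule total_recursive_cong) (auto simp: block_approx_def)
qed

context
  fixes f :: recf and A :: "nat set"
  assumes dom: "\<forall>x. x \<in> A \<longleftrightarrow> (\<exists>y. eval f [x] y)"
begin

lemma halted_subset: "{x. x < m \<and> eval_fuel s f [x] \<noteq> None} \<subseteq> A \<inter> {0..<m}"
  using dom eval_fuel_sound by fastforce

lemma exists_halted_count_eq: "\<exists>s. halted_count f s m = card (A \<inter> {0..<m})"
proof -
  have "\<forall>x \<in> A \<inter> {0..<m}. \<exists>s y. eval_fuel s f [x] = Some y"
    using dom eval_fuel_complete by blast
  then obtain S Y where "\<forall>x \<in> A \<inter> {0..<m}. eval_fuel (S x) f [x] = Some (Y x)" by metis
  then obtain s where "\<forall>x \<in> A \<inter> {0..<m}. eval_fuel s f [x] = Some (Y x)"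
    using eval_fuel_mono_finite[of "A \<inter> {0..<m}" S "\<lambda>_. f" "\<lambda>x. [x]" Y] by auto
  then have "{x. x < m \<and> eval_fuel s f [x] \<noteq> None} = A \<inter> {0..<m}"
    using dom by (auto dest: eval_fuel_sound)
  then show ?thesis unfolding halted_count_def by metis
qed

lemma block_approx_subset: "block_approx f N p q \<subseteq> A"
  using halted_subset unfolding block_approx_def by blast

context
  fixes N p q :: nat
  assumes lower: "\<And>m. N \<le> m \<Longrightarrow> p * m \<le> q * card (A \<inter> {0..<m})"
begin

lemma stage_exists: "\<exists>s. N \<le> x \<longrightarrow> p * block_end x \<le> q * halted_count f s (block_end x)"
proof (cases "N \<le> x")
  case True
  then have "N \<le> block_end x" using block_end_bounds[of x] by linarith
  moreover obtain s where "halted_count f s (block_end x) = card (A \<inter> {0..<block_end x})"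
    using exists_halted_count_eq by blast
  ultimately show ?thesis using lower by (intro exI[of _ s]) simp
qed simp

lemma stage_spec: "N \<le> x \<Longrightarrow> p * block_end x \<le> q * halted_count f (stage f N p q x) (block_end x)"
  unfolding stage_def using LeastI_ex[OF stage_exists] by blast

lemma computable_set_block_approx: "computable_set (block_approx f N p q)"
  using computable_set_block_approxI stage_exists by blast

lemma block_approx_defect:
  assumes "0 < q" and upper: "\<And>m. N \<le> m \<Longrightarrow> real (card (A \<inter> {0..<m})) \<le> (p / q + \<gamma>) * m"
    and "N \<le> 2 ^ j"
  shows "real (card ((A - block_approx f N p q) \<inter> {2 ^ j..<2 ^ Suc j})) \<le> 2 * \<gamma> * 2 ^ j"
proof -
  define E :: nat where "E = 2 ^ Suc j"
  define t where "t = stage f N p q (2 ^ j)"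
  define St where "St = {x. x < E \<and> eval_fuel t f [x] \<noteq> None}"
  have block_stage: "stage f N p q x = t" if "2 ^ j \<le> x" "x < E" for x
    using that assms(3) block_end_eq[OF that(1)] block_end_eq[of j "2 ^ j"]
    unfolding t_def stage_def E_def by simp
  have "(A - block_approx f N p q) \<inter> {2 ^ j..<2 ^ Suc j} \<subseteq> (A \<inter> {0..<E}) - St"
    using block_stage assms(3) by (auto simp: block_approx_def St_def E_def)
  then have "card ((A - block_approx f N p q) \<inter> {2 ^ j..<2 ^ Suc j}) \<le> card ((A \<inter> {0..<E}) - St)"
    by (intro card_mono) auto
  also have "\<dots> = card (A \<inter> {0..<E}) - card St"
    using halted_subset unfolding St_def by (intro card_Diff_subset) auto
  finally have "real (card ((A - block_approx f N p q) \<inter> {2 ^ j..<2 ^ Suc j}))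
      \<le> real (card (A \<inter> {0..<E})) - card St"
    using card_mono[OF _ halted_subset[of E t]] unfolding St_def by (simp add: of_nat_diff)
  moreover have "p * E \<le> q * card St"
    using stage_spec[of "2 ^ j"] assms(3) block_end_eq[of j "2 ^ j"]
    by (simp add: t_def St_def E_def halted_count_def)
  then have "p / q * E \<le> card St"
    using \<open>0 < q\<close> by (simp add: field_simps) (metis of_nat_le_iff of_nat_mult)
  moreover have "N \<le> E" using assms(3) by (simp add: E_def)
  ultimately show ?thesis using upper[of E] by (simp add: E_def algebra_simps)
qed

end

end

lemma exists_nat_fraction_between:
  fixes a b :: real
  assumes "0 \<le> a" "a < b"
  shows "\<exists>(p::nat) (q::nat). 0 < q \<and> a < real p / real q \<and> real p / real q < b"
proof -
  obtain r where "r \<in> \<rat>" "a < r" "r < b" using Rats_dense_in_real[OF assms(2)] by blast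
  moreover from \<open>r \<in> \<rat>\<close> obtain i k :: int where "0 < k" "r = i / k" by (elim Rats_cases') auto
  moreover have "0 < i"
  proof -
    have "0 < real_of_int i / real_of_int k" using assms(1) calculation by linarith
    then show ?thesis using \<open>0 < k\<close> by (simp add: zero_less_divide_iff)
  qed
  ultimately show ?thesis by (intro exI[of _ "nat i"] exI[of _ "nat k"]) simp
qed

lemma exists_computable_subset_small_defect:
  fixes A :: "nat set" and d \<eta> :: real
  assumes dom: "\<forall>x. x \<in> A \<longleftrightarrow> (\<exists>y. eval f [x] y)"
    and lim: "(\<lambda>n. rho_n A (Suc n)) \<longlonglongrightarrow> d" and "0 < d" "0 < \<eta>"
  shows "\<exists>B \<subseteq> A. computable_set B \<and> upper_density (A - B) < ereal \<eta>"
proof -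
  obtain p q :: nat where q: "0 < q" and pq: "max 0 (d - \<eta> / 8) < p / q" "p / q < d"
    using exists_nat_fraction_between[of "max 0 (d - \<eta> / 8)" d] assms(3,4) by auto
  define \<delta> where "\<delta> = d - p / q"
  have \<delta>: "0 < \<delta>" "\<delta> < \<eta> / 8" using pq by (auto simp: \<delta>_def)
  obtain N where N: "\<And>m. N \<le> m
      \<Longrightarrow> (d - \<delta>) * m \<le> card (A \<inter> {0..<m}) \<and> card (A \<inter> {0..<m}) \<le> (d + \<delta>) * m"
    using density_bounds_eventually[OF lim \<delta>(1)] by blast
  have lower: "p * m \<le> q * card (A \<inter> {0..<m})" if "N \<le> m" for m
  proof -
    have "real p * m = q * ((d - \<delta>) * m)" using q by (simp add: \<delta>_def)
    also have "\<dots> \<le> real q * card (A \<inter> {0..<m})" using N[OF that] by (intro mult_left_mono) auto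
    finally show ?thesis by (metis of_nat_le_iff of_nat_mult)
  qed
  have upper: "card (A \<inter> {0..<m}) \<le> (p / q + 2 * \<delta>) * m" if "N \<le> m" for m
    using N[OF that] by (simp add: \<delta>_def)
  define B where "B = block_approx f N p q"
  have "upper_density (A - B) \<le> ereal (2 * (2 * (2 * \<delta>)))"
  proof (rule upper_density_le_of_blocks)
    fix j assume "N \<le> j"
    then have "N \<le> 2 ^ j" using less_exp[of j] by linarith
    then show "real (card ((A - B) \<inter> {2 ^ j..<2 ^ Suc j})) \<le> 2 * (2 * \<delta>) * 2 ^ j"
      unfolding B_def using block_approx_defect[OF dom lower q upper] by blast
  qed
  also have "\<dots> < ereal \<eta>" using \<delta> by simp
  finally show ?thesis
    using block_approx_subset[OF dom] computable_set_block_approx[OF dom lower] unfolding B_def by blast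
qed

theorem mainTheorem8:
  fixes A :: "nat set" and \<epsilon> :: real
  assumes "ce_set A" and "has_density A" and "\<epsilon> > 0"
  shows "\<exists>B. B \<subseteq> A \<and> computable_set B \<and> D A B < ereal \<epsilon>"
proof -
  obtain f where dom: "\<forall>x. x \<in> A \<longleftrightarrow> (\<exists>y. eval f [x] y)"
    using assms(1) unfolding ce_set_def by blast
  obtain d where lim: "(\<lambda>n. rho_n A (Suc n)) \<longlonglongrightarrow> d"
    using assms(2) unfolding has_density_def convergent_def by blast
  show ?thesis
  proof (cases "d < \<epsilon>")
    case True
    have "computable_set {}" by (rule computable_setI) (simp add: total_recursive_const)
    moreover have "D A {} < ereal \<epsilon>"
      using True upper_density_eq_density[OF lim] D_eq_upper_density_diff[of "{}" A] by simp
    ultimately show ?thesis by blast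
  next
    case False
    then obtain B where "B \<subseteq> A" "computable_set B" "upper_density (A - B) < ereal \<epsilon>"
      using exists_computable_subset_small_defect[OF dom lim _ assms(3)] assms(3) by auto
    then show ?thesis using D_eq_upper_density_diff by metis
  qed
qed

end
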